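(* Let $G$ be a connected graph with $n$ vertices, where $n$ is a multiple of $3$. If $G$ contains a cycle of length at least $4$, then $G$ is detachable.
   Context: A connected graph $G$ with $n$ vertices, $n$ a multiple of $3$, is detachable if its vertex set can be partitioned into two nonempty sets $V_1,V_2$ such that $|V_1|$ and $|V_2|$ are both multiples of $3$ and the induced subgraphs $G[V_1]$ and $G[V_2]$ are both connected (equivalently, there is an edge cut separating $G$ into two connected subgraphs whose sizes are multiples of $3$). *)

theory Defs
  imports Main
begin

definition simple_graph :: "'a set \<Rightarrow> ('a \<Rightarrow> 'a \<Rightarrow> bool) \<Rightarrow> bool" where
  "simple_graph V E \<longleftrightarrow> finite V \<and> (\<forall>x y. E x y \<longrightarrow> x \<in> V \<and> y \<in> V)
     \<and> (\<forall>x y. E x y \<longrightarrow> E y x) \<and> (\<forall>x. \<not> E x x)"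

definition induced_connected :: "('a \<Rightarrow> 'a \<Rightarrow> bool) \<Rightarrow> 'a set \<Rightarrow> bool" where
  "induced_connected E S \<longleftrightarrow> S \<noteq> {} \<and>
     (\<forall>x\<in>S. \<forall>y\<in>S. (\<lambda>u v. E u v \<and> u \<in> S \<and> v \<in> S)\<^sup>*\<^sup>* x y)"

definition is_cycle :: "'a set \<Rightarrow> ('a \<Rightarrow> 'a \<Rightarrow> bool) \<Rightarrow> 'a list \<Rightarrow> bool" where
  "is_cycle V E cs \<longleftrightarrow> length cs \<ge> 3 \<and> distinct cs \<and> set cs \<subseteq> V
     \<and> (\<forall>i. Suc i < length cs \<longrightarrow> E (cs ! i) (cs ! Suc i))
     \<and> E (last cs) (hd cs)"

definition detachable :: "'a set \<Rightarrow> ('a \<Rightarrow> 'a \<Rightarrow> bool) \<Rightarrow> bool" where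
  "detachable V E \<longleftrightarrow> (\<exists>V1 V2. V1 \<noteq> {} \<and> V2 \<noteq> {} \<and> V1 \<inter> V2 = {} \<and> V1 \<union> V2 = V
     \<and> 3 dvd card V1 \<and> 3 dvd card V2
     \<and> induced_connected E V1 \<and> induced_connected E V2)"

end

theory Submission
  imports Defs "HOL-Library.Disjoint_Sets"
begin

text \<open>
  Split the long cycle into four arcs: three single vertices and the remaining path. These
  four disjoint connected sets, each adjacent to the next one cyclically, are grown one
  neighbouring vertex at a time until they partition \<open>V\<close> into cyclically adjacent connected
  parts \<open>A, B, C, D\<close>. A part, or two consecutive parts, together with the union of the
  remaining parts then splits \<open>V\<close> into two connected pieces, and since
  \<open>|A| + |B| + |C| + |D|\<close> is divisible by 3, one of \<open>|A|, |B|, |C|, |D|, |A| + |B|, |B| + |C|\<close> is.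
\<close>

definition adjacent_sets :: "('a \<Rightarrow> 'a \<Rightarrow> bool) \<Rightarrow> 'a set \<Rightarrow> 'a set \<Rightarrow> bool" where
  "adjacent_sets E A B \<longleftrightarrow> (\<exists>a\<in>A. \<exists>b\<in>B. E a b)"

lemma adjacent_sets_mono:
  "adjacent_sets E A B \<Longrightarrow> A \<subseteq> A' \<Longrightarrow> B \<subseteq> B' \<Longrightarrow> adjacent_sets E A' B'"
  unfolding adjacent_sets_def by blast

lemma induced_walk_mono:
  assumes "S \<subseteq> T" "(\<lambda>u v. E u v \<and> u \<in> S \<and> v \<in> S)\<^sup>*\<^sup>* x y"
  shows "(\<lambda>u v. E u v \<and> u \<in> T \<and> v \<in> T)\<^sup>*\<^sup>* x y"
  using assms(2) by (rule rtranclp_mono[THEN predicate2D, rotated]) (use assms(1) in auto)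

lemma induced_connected_singleton: "induced_connected E {x}"
  unfolding induced_connected_def by auto

lemma induced_connected_Un:
  assumes sym: "\<forall>x y. E x y \<longrightarrow> E y x"
    and A: "induced_connected E A" and B: "induced_connected E B"
    and AB: "adjacent_sets E A B"
  shows "induced_connected E (A \<union> B)"
proof -
  let ?R = "\<lambda>u v. E u v \<and> u \<in> A \<union> B \<and> v \<in> A \<union> B"
  obtain a b where ab: "a \<in> A" "b \<in> B" "E a b"
    using AB unfolding adjacent_sets_def by blast
  have walk_A: "?R\<^sup>*\<^sup>* x y" if "x \<in> A" "y \<in> A" for x y
    using A that induced_walk_mono[of A "A \<union> B" E x y] unfolding induced_connected_def by blast
  have walk_B: "?R\<^sup>*\<^sup>* x y" if "x \<in> B" "y \<in> B" for x y
    using B that induced_walk_mono[of B "A \<union> B" E x y] unfolding induced_connected_def by blast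
  have "?R\<^sup>*\<^sup>* a b" "?R\<^sup>*\<^sup>* b a" using ab sym by auto
  then have "?R\<^sup>*\<^sup>* x y" if "x \<in> A \<union> B" "y \<in> A \<union> B" for x y
    using that walk_A[of x a] walk_A[of a y] walk_B[of x b] walk_B[of b y] ab
    by (meson Un_iff rtranclp_trans)
  then show ?thesis
    using ab unfolding induced_connected_def by auto
qed

lemma induced_connected_path:
  assumes sym: "\<forall>x y. E x y \<longrightarrow> E y x"
    and "xs \<noteq> []" "\<forall>i. Suc i < length xs \<longrightarrow> E (xs ! i) (xs ! Suc i)"
  shows "induced_connected E (set xs)"
  using assms(2,3)
proof (induction xs)
  case Nil
  then show ?case by simp
next
  case (Cons x xs)
  show ?case
  proof (cases "xs = []")
    case True
    then show ?thesis by (simp add: induced_connected_singleton)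
  next
    case False
    have "\<forall>i. Suc i < length xs \<longrightarrow> E (xs ! i) (xs ! Suc i)"
      using Cons.prems(2) by (metis Suc_mono length_Cons nth_Cons_Suc)
    then have "induced_connected E (set xs)"
      using Cons.IH False by blast
    moreover have "adjacent_sets E {x} (set xs)"
      using Cons.prems(2)[rule_format, of 0] False
      unfolding adjacent_sets_def by (auto intro: nth_mem)
    ultimately show ?thesis
      using induced_connected_Un[OF sym induced_connected_singleton] by fastforce
  qed
qed

lemma rtranclp_crossing_step:
  "r\<^sup>*\<^sup>* x y \<Longrightarrow> \<not> P x \<Longrightarrow> P y \<Longrightarrow> \<exists>u v. r u v \<and> \<not> P u \<and> P v"
  by (induction rule: rtranclp_induct) auto

lemma induced_connected_exists_edge_into:
  assumes "induced_connected E V" "U \<subseteq> V" "U \<noteq> {}" "U \<noteq> V"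
  shows "\<exists>u\<in>V - U. \<exists>v\<in>U. E u v"
proof -
  obtain y x where "y \<in> V - U" "x \<in> U" using assms(2-4) by blast
  then have "(\<lambda>u v. E u v \<and> u \<in> V \<and> v \<in> V)\<^sup>*\<^sup>* y x"
    using assms(1,2) unfolding induced_connected_def by blast
  then show ?thesis
    using rtranclp_crossing_step[where P = "\<lambda>z. z \<in> U"] \<open>y \<in> V - U\<close> \<open>x \<in> U\<close> by fastforce
qed

text \<open>Each step attaches a vertex outside the family to a part containing one of its
  neighbours; the number of uncovered vertices decreases.\<close>
lemma connected_parts_extend_to_partition:
  fixes B :: "'i \<Rightarrow> 'a set"
  assumes fin: "finite V" and sym: "\<forall>x y. E x y \<longrightarrow> E y x"
    and conn: "induced_connected E V" and "I \<noteq> {}"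
    and "\<forall>i\<in>I. B i \<subseteq> V \<and> induced_connected E (B i)" and "disjoint_family_on B I"
  shows "\<exists>C. (\<forall>i\<in>I. B i \<subseteq> C i \<and> induced_connected E (C i))
    \<and> disjoint_family_on C I \<and> (\<Union>i\<in>I. C i) = V"
  using assms(5,6)
proof (induction "card (V - (\<Union>i\<in>I. B i))" arbitrary: B rule: less_induct)
  case less
  let ?U = "\<Union>i\<in>I. B i"
  show ?case
  proof (cases "?U = V")
    case True
    then show ?thesis using less.prems by blast
  next
    case False
    have "?U \<subseteq> V" using less.prems(1) by blast
    moreover have "?U \<noteq> {}"
      using less.prems(1) \<open>I \<noteq> {}\<close> by (auto simp: induced_connected_def)
    ultimately obtain u v where uv: "u \<in> V" "u \<notin> ?U" "v \<in> ?U" "E u v"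
      using induced_connected_exists_edge_into[OF conn _ _ False] by blast
    then obtain i where i: "i \<in> I" "v \<in> B i" by blast
    define B' where "B' = B(i := insert u (B i))"
    have grows: "\<forall>j. B j \<subseteq> B' j" "u \<in> B' i" unfolding B'_def by auto
    then have "V - (\<Union>j\<in>I. B' j) \<subseteq> (V - ?U) - {u}" using i by blast
    then have "card (V - (\<Union>j\<in>I. B' j)) \<le> card ((V - ?U) - {u})"
      using fin by (intro card_mono) auto
    also have "\<dots> < card (V - ?U)"
      using fin uv by (intro card_Diff1_less) auto
    finally have smaller: "card (V - (\<Union>j\<in>I. B' j)) < card (V - ?U)" .
    have "induced_connected E (insert u (B i))"
      using induced_connected_Un[OF sym induced_connected_singleton, of "B i" u] less.prems(1) i uv
      unfolding adjacent_sets_def by auto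
    then have "\<forall>j\<in>I. B' j \<subseteq> V \<and> induced_connected E (B' j)"
      unfolding B'_def using less.prems(1) uv(1) by simp
    moreover have "disjoint_family_on B' I"
      using less.prems(2) uv(2) unfolding B'_def disjoint_family_on_def by auto
    ultimately obtain C where "\<forall>j\<in>I. B' j \<subseteq> C j \<and> induced_connected E (C j)"
      "disjoint_family_on C I" "(\<Union>j\<in>I. C j) = V"
      using less.hyps[OF smaller] by blast
    then show ?thesis using grows(1) by blast
  qed
qed

lemma detachable_if_connected_split:
  assumes "finite V" "3 dvd card V"
    and "induced_connected E S" "induced_connected E T" "S \<inter> T = {}" "S \<union> T = V"
    and "3 dvd card S"
  shows "detachable V E"
proof -
  have "card V = card S + card T"
    using assms(1,5,6) by (metis card_Un_disjoint finite_Un)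
  then have "3 dvd card T"
    using assms(2,7) by presburger
  moreover have "S \<noteq> {}" "T \<noteq> {}"
    using assms(3,4) unfolding induced_connected_def by auto
  ultimately show ?thesis
    unfolding detachable_def using assms(3-7) by blast
qed

definition cyclic_partition4 ::
    "('a \<Rightarrow> 'a \<Rightarrow> bool) \<Rightarrow> 'a set \<Rightarrow> 'a set \<Rightarrow> 'a set \<Rightarrow> 'a set \<Rightarrow> 'a set \<Rightarrow> bool" where
  "cyclic_partition4 E V A B C D \<longleftrightarrow>
     induced_connected E A \<and> induced_connected E B \<and> induced_connected E C \<and> induced_connected E D
     \<and> A \<inter> B = {} \<and> A \<inter> C = {} \<and> A \<inter> D = {} \<and> B \<inter> C = {} \<and> B \<inter> D = {} \<and> C \<inter> D = {}
     \<and> A \<union> B \<union> C \<union> D = V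
     \<and> adjacent_sets E A B \<and> adjacent_sets E B C \<and> adjacent_sets E C D \<and> adjacent_sets E D A"

lemma cyclic_partition4_rotate:
  "cyclic_partition4 E V A B C D \<Longrightarrow> cyclic_partition4 E V B C D A"
  unfolding cyclic_partition4_def by (simp add: Int_commute Un_ac)

lemma detachable_if_cyclic_arc:
  assumes sym: "\<forall>x y. E x y \<longrightarrow> E y x" and fin: "finite V" and "3 dvd card V"
    and part: "cyclic_partition4 E V A B C D"
    and arc: "3 dvd card A \<or> 3 dvd card (A \<union> B)"
  shows "detachable V E"
proof -
  have conn: "induced_connected E A" "induced_connected E B"
      "induced_connected E C" "induced_connected E D"
    and disjoint: "A \<inter> B = {}" "A \<inter> C = {}" "A \<inter> D = {}" "B \<inter> C = {}" "B \<inter> D = {}" "C \<inter> D = {}"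
    and cover: "A \<union> B \<union> C \<union> D = V"
    and adj: "adjacent_sets E A B" "adjacent_sets E B C" "adjacent_sets E C D"
    using part unfolding cyclic_partition4_def by simp_all
  have conn_AB: "induced_connected E (A \<union> B)"
    by (rule induced_connected_Un[OF sym conn(1,2) adj(1)])
  have conn_CD: "induced_connected E (C \<union> D)"
    by (rule induced_connected_Un[OF sym conn(3,4) adj(3)])
  have "adjacent_sets E B (C \<union> D)"
    using adj(2) by (rule adjacent_sets_mono) auto
  then have conn_BCD: "induced_connected E (B \<union> (C \<union> D))"
    by (rule induced_connected_Un[OF sym conn(2) conn_CD])
  from arc show ?thesis
  proof
    assume "3 dvd card A"
    moreover have "A \<inter> (B \<union> (C \<union> D)) = {}" "A \<union> (B \<union> (C \<union> D)) = V"
      using disjoint cover by blast+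
    ultimately show ?thesis
      using detachable_if_connected_split[OF fin \<open>3 dvd card V\<close> conn(1) conn_BCD] by blast
  next
    assume "3 dvd card (A \<union> B)"
    moreover have "(A \<union> B) \<inter> (C \<union> D) = {}" "(A \<union> B) \<union> (C \<union> D) = V"
      using disjoint cover by blast+
    ultimately show ?thesis
      using detachable_if_connected_split[OF fin \<open>3 dvd card V\<close> conn_AB conn_CD] by blast
  qed
qed

lemma detachable_if_cyclic_partition4:
  assumes sym: "\<forall>x y. E x y \<longrightarrow> E y x" and fin: "finite V" and dvd_V: "3 dvd card V"
    and part: "cyclic_partition4 E V A B C D"
  shows "detachable V E"
proof -
  have disjoint: "A \<inter> B = {}" "B \<inter> C = {}" "(A \<union> B) \<inter> (C \<union> D) = {}" "C \<inter> D = {}"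
    and cover: "(A \<union> B) \<union> (C \<union> D) = V"
    using part unfolding cyclic_partition4_def by (simp_all add: Int_Un_distrib Int_Un_distrib2 Un_assoc)
  then have "finite A" "finite B" "finite C" "finite D"
    using fin by (metis finite_Un)+
  then have "card (A \<union> B) = card A + card B" "card (B \<union> C) = card B + card C"
      "card (C \<union> D) = card C + card D" "card V = card (A \<union> B) + card (C \<union> D)"
    using disjoint cover by (simp_all add: card_Un_disjoint flip: cover)
  text \<open>Of the partial sums \<open>0, |A|, |A| + |B|, |A| + |B| + |C|\<close> two agree modulo 3.\<close>
  then have "(3 dvd card A \<or> 3 dvd card (A \<union> B)) \<or> (3 dvd card B \<or> 3 dvd card (B \<union> C))
      \<or> 3 dvd card C \<or> 3 dvd card D"
    using dvd_V by simp presburger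
  then consider "3 dvd card A \<or> 3 dvd card (A \<union> B)" | "3 dvd card B \<or> 3 dvd card (B \<union> C)"
    | "3 dvd card C" | "3 dvd card D"
    by blast
  then show ?thesis
  proof cases
    case 1
    then show ?thesis by (rule detachable_if_cyclic_arc[OF sym fin dvd_V part])
  next
    case 2
    then show ?thesis
      by (rule detachable_if_cyclic_arc[OF sym fin dvd_V cyclic_partition4_rotate[OF part]])
  next
    case 3
    then show ?thesis
      using detachable_if_cyclic_arc[OF sym fin dvd_V
          cyclic_partition4_rotate[OF cyclic_partition4_rotate[OF part]]] by blast
  next
    case 4
    then show ?thesis
      using detachable_if_cyclic_arc[OF sym fin dvd_V
          cyclic_partition4_rotate[OF cyclic_partition4_rotate[OF cyclic_partition4_rotate[OF part]]]]
      by blast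
  qed
qed

lemma cyclic_partition4_extend:
  assumes fin: "finite V" and sym: "\<forall>x y. E x y \<longrightarrow> E y x"
    and conn: "induced_connected E V" and "U \<subseteq> V"
    and part: "cyclic_partition4 E U A B C D"
  shows "\<exists>A' B' C' D'. cyclic_partition4 E V A' B' C' D'"
proof -
  have conn_ABCD: "induced_connected E A" "induced_connected E B"
      "induced_connected E C" "induced_connected E D"
    and disjoint: "A \<inter> B = {}" "A \<inter> C = {}" "A \<inter> D = {}" "B \<inter> C = {}" "B \<inter> D = {}" "C \<inter> D = {}"
    and "A \<union> B \<union> C \<union> D = U"
    and adj: "adjacent_sets E A B" "adjacent_sets E B C" "adjacent_sets E C D" "adjacent_sets E D A"
    using part unfolding cyclic_partition4_def by simp_all
  \<comment> \<open>Integer indices, as the simplifier turns the natural number \<open>1\<close> into \<open>Suc 0\<close>.\<close>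
  define F :: "int \<Rightarrow> 'a set" where
    "F = (\<lambda>i. if i = 0 then A else if i = 1 then B else if i = 2 then C else D)"
  have F: "F 0 = A" "F 1 = B" "F 2 = C" "F 3 = D"
    unfolding F_def by simp_all
  have parts: "\<forall>i\<in>{0, 1, 2, 3}. F i \<subseteq> V \<and> induced_connected E (F i)"
    using conn_ABCD \<open>A \<union> B \<union> C \<union> D = U\<close> \<open>U \<subseteq> V\<close> by (auto simp: F)
  have disj: "disjoint_family_on F {0, 1, 2, 3}"
    unfolding disjoint_family_on_def using disjoint by (auto simp: F)
  obtain G where G: "\<forall>i\<in>{0, 1, 2, 3}. F i \<subseteq> G i \<and> induced_connected E (G i)"
    "disjoint_family_on G {0, 1, 2, 3}" "(\<Union>i\<in>{0, 1, 2, 3}. G i) = V"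
    using connected_parts_extend_to_partition[OF fin sym conn _ parts disj] by blast
  have sup: "A \<subseteq> G 0" "B \<subseteq> G 1" "C \<subseteq> G 2" "D \<subseteq> G 3"
    using G(1) unfolding F[symmetric] by simp_all
  have "adjacent_sets E (G 0) (G 1)" "adjacent_sets E (G 1) (G 2)"
    "adjacent_sets E (G 2) (G 3)" "adjacent_sets E (G 3) (G 0)"
    using adjacent_sets_mono[OF adj(1) sup(1,2)] adjacent_sets_mono[OF adj(2) sup(2,3)]
      adjacent_sets_mono[OF adj(3) sup(3,4)] adjacent_sets_mono[OF adj(4) sup(4,1)] .
  then have "cyclic_partition4 E V (G 0) (G 1) (G 2) (G 3)"
    using G(1,3) G(2)[unfolded disjoint_family_on_def]
    unfolding cyclic_partition4_def by (simp add: Un_assoc)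
  then show ?thesis by blast
qed

lemma long_cycle_cyclic_partition4:
  assumes sym: "\<forall>x y. E x y \<longrightarrow> E y x" and cycle: "is_cycle V E cs" and "length cs \<ge> 4"
  shows "\<exists>A B C D. cyclic_partition4 E (set cs) A B C D"
proof -
  obtain a b c d Q where cs: "cs = a # b # c # d # Q"
    using \<open>length cs \<ge> 4\<close> by (auto simp: numeral_eq_Suc Suc_le_length_iff)
  define P where "P = d # Q"
  have "distinct cs" and step: "\<forall>i. Suc i < length cs \<longrightarrow> E (cs ! i) (cs ! Suc i)"
    and wrap: "E (last cs) (hd cs)"
    using cycle unfolding is_cycle_def by auto
  have "E (P ! i) (P ! Suc i)" if "Suc i < length P" for i
    using step[rule_format, of "i + 3"] that unfolding cs P_def by simp
  then have "induced_connected E (set P)"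
    using induced_connected_path[OF sym] unfolding P_def by blast
  moreover have "E a b" "E b c" "E c (hd P)" "E (last P) a"
    using step[rule_format, of 0] step[rule_format, of 1] step[rule_format, of 2] wrap
    unfolding cs P_def by simp_all
  ultimately have "cyclic_partition4 E (set cs) {a} {b} {c} (set P)"
    using \<open>distinct cs\<close> unfolding cyclic_partition4_def adjacent_sets_def cs P_def
    by (auto simp: induced_connected_singleton split: if_split_asm)
  then show ?thesis by blast
qed

theorem lemma7:
  fixes V :: "'a set" and E :: "'a \<Rightarrow> 'a \<Rightarrow> bool"
  assumes "simple_graph V E"
    and "induced_connected E V"
    and "3 dvd card V"
    and "\<exists>cs. is_cycle V E cs \<and> length cs \<ge> 4"
  shows "detachable V E"
proof -
  have fin: "finite V" and sym: "\<forall>x y. E x y \<longrightarrow> E y x"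
    using assms(1) unfolding simple_graph_def by auto
  obtain cs where cycle: "is_cycle V E cs" and "length cs \<ge> 4"
    using assms(4) by blast
  then obtain A B C D where "cyclic_partition4 E (set cs) A B C D"
    using long_cycle_cyclic_partition4[OF sym] by blast
  moreover have "set cs \<subseteq> V"
    using cycle unfolding is_cycle_def by blast
  ultimately obtain A' B' C' D' where "cyclic_partition4 E V A' B' C' D'"
    using cyclic_partition4_extend[OF fin sym assms(2)] by blast
  then show ?thesis
    by (rule detachable_if_cyclic_partition4[OF sym fin assms(3)])
qed

end
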